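(* Let $\mathcal{M}=((\{X_t\},X),\mathcal{A},\psi,\{Q_t\},(c,h),T)$ be an approximable MDP with terminal cost decomposition $h=h_1+h_2$, data $b,f_1,f_2$ and weight function $w$ as in the context, and let $J_t$ be its optimal cost-to-go functions. For $\lambda>0$ let $\tilde J_t^{\lambda}$ be the optimal cost-to-go functions of the $\lambda$-smoothed MDP $\tilde{\mathcal{M}}_\lambda$. Then for every $\theta>0$ there exists $\Lambda\in\mathbb{R}$ such that for all $\lambda>\Lambda$ and all $t\in\{0,\dots,T-1\}$, $$\sup_{x\in X_t}\big|\tilde J^{\lambda}_t(x)-J_t(x)\big|\le\big(\|J_T\|_w+\|\tilde J^{\lambda}_T\|_w\big)\,\theta .$$
   Context: A finite horizon MDP $\mathcal{M}=((\{X_t\}_{t},X),\mathcal{A},\psi,\{Q_t\}_t,(c,h),T)$ consists of: a state space $X$ with Borel subsets $X_t\subseteq X$ (state space at time $t$); a locally compact Borel space $\mathcal{A}$ of actions with metric $d_A$; a map $\psi$ assigning to each $x\in X$ a measurable set $\psi(x)\subseteq\mathcal{A}$ of feasible actions, with $\mathbb{K}_t=\{(x,a):x\in X_t,a\in\psi(x)\}$, $\mathbb{K}=\{(x,a):x\in X,a\in\psi(x)\}$ measurable; stochastic kernels $Q_t(\cdot\mid x,a)$, probability measures on $X_{t+1}$ measurable in $(x,a)$; a measurable stage cost $c:\mathbb{K}\to\mathbb{R}$; a measurable terminal cost $h:X\to\mathbb{R}$; a horizon $T\in\mathbb{N}$. Its optimal cost-to-go functions are $J_T=h$ on $X_T$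 and $J_t(x)=\inf_{a\in\psi(x)}\{c(x,a)+\int_{X_{t+1}}J_{t+1}(y)Q_t(dy\mid x,a)\}$ for $x\in X_t$, $t=T-1,\dots,0$. For $v:X\to\mathbb{R}$ set $\zeta_{v,t}(x,a)=\int_{X_{t+1}}v(y)Q_t(dy\mid x,a)$. For a positive function $w$, $\|v\|_w=\sup_x |v(x)|/w(x)$. The Hausdorff distance of sets is $d_H$. The MDP is approximable if: (1) $X=\mathbb{R}^m$ (Euclidean metric $d_X$); (2) $\psi(x)$ is compact for all $x$; (3) $d_H(\psi(x),\psi(y))\le L_\psi d_X(x,y)$ for some $L_\psi>0$; (4) $c$ is Lipschitz on $\mathbb{K}$ (constant $L_c$), and $h=h_1+h_2$ where $h_1$ is Lipschitz and $h_2(x)=f_1(x)$ if $x<b$ (componentwise), $h_2(x)=f_2(x)$ otherwise, for some $b\in\mathbb{R}^m$ and bounded Lipschitz $f_1,f_2$; and there are a positive lower semicontinuous $w:X\to\mathbb{R}$ and $\bar c>0$ with $|h_1(x)|+\|h_2\|_\infty+\sup_{a\in\psi(x)}|c(x,a)|\le\bar c\,w(x)$; (5) $\zeta_{w,t}$ is upper semicontinuous on $\mathbb{K}_t$ and $\zeta_{w,t}(x,a)\le\bar d\,w(x)$ on $\mathbb{K}_t$ for some $\bar d>0$; (6) for each bounded continuous $v$ and each $t$, $\zeta_{v,t}$ is continuous on $\mathbb{K}$; (7) there is $L_q>0$ such that for every $t$, all $(x,a),(y,a')\in\mathbb{K}_t$ and every Lipschitz $v$ with constant $L_v$, $|\zeta_{v,t}(x,a)-\zeta_{v,t}(y,a')|\le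 L_qL_v(d_X(x,y)+d_A(a,a'))$; (8) for every $\theta>0$ there is $\Lambda$ with $\sup_{x\in X,u\in\psi(x)}\int_{\mathcal{R}_{\lambda,b}}w(y)Q_{T-1}(dy\mid x,u)<\theta$ for all $\lambda>\Lambda$. Here $g_{\lambda,b}(x)=\prod_{i=1}^m g_i(x)$ with $g_i(x)=1$ if $x_i\le b_i-1/\lambda$, $g_i(x)=-\lambda(x_i-b_i)$ if $b_i-1/\lambda<x_i<b_i$, $g_i(x)=0$ if $x_i\ge b_i$, and $\mathcal{R}_{\lambda,b}=\{x: g_{\lambda,b}(x)\ne\mathbb{1}_{\{z:z<b\}}(x)\}$. The $\lambda$-smoothed MDP $\tilde{\mathcal{M}}_\lambda$ is $\mathcal{M}$ with terminal cost $h$ replaced by $h_1+\tilde h_\lambda$, where $\tilde h_\lambda=f_1g_{\lambda,b}+f_2(1-g_{\lambda,b})$. *)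

theory Defs
  imports "HOL-Analysis.Analysis" "HOL-Probability.Probability"
begin

definition hausdist :: "'a::metric_space set \<Rightarrow> 'a set \<Rightarrow> real" where
  "hausdist A B = max (SUP a\<in>A. infdist a B) (SUP b\<in>B. infdist b A)"

definition usc_on :: "'a::metric_space set \<Rightarrow> ('a \<Rightarrow> real) \<Rightarrow> bool" where
  "usc_on S f \<longleftrightarrow> (\<forall>p\<in>S. \<forall>e>0. \<exists>d>0. \<forall>q\<in>S. dist q p < d \<longrightarrow> f q < f p + e)"

definition lsc_on :: "'a::metric_space set \<Rightarrow> ('a \<Rightarrow> real) \<Rightarrow> bool" where
  "lsc_on S f \<longleftrightarrow> (\<forall>p\<in>S. \<forall>e>0. \<exists>d>0. \<forall>q\<in>S. dist q p < d \<longrightarrow> f p - e < f q)"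

definition wnorm :: "('x \<Rightarrow> real) \<Rightarrow> ('x \<Rightarrow> real) \<Rightarrow> ereal" where
  "wnorm w v = (SUP x. ereal (\<bar>v x\<bar> / w x))"

definition vless :: "real^'m \<Rightarrow> real^'m \<Rightarrow> bool" where
  "vless x b \<longleftrightarrow> (\<forall>i. x $ i < b $ i)"

definition zeta :: "(nat \<Rightarrow> 'x set) \<Rightarrow> (nat \<Rightarrow> 'x \<times> 'a \<Rightarrow> 'x measure)
    \<Rightarrow> ('x \<Rightarrow> real) \<Rightarrow> nat \<Rightarrow> 'x \<times> 'a \<Rightarrow> real" where
  "zeta Xs Q v t p = (LINT y:Xs (Suc t)|Q t p. v y)"

definition bellman :: "(nat \<Rightarrow> 'x set) \<Rightarrow> ('x \<Rightarrow> 'a set) \<Rightarrow> (nat \<Rightarrow> 'x \<times> 'a \<Rightarrow> 'x measure)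
    \<Rightarrow> ('x \<times> 'a \<Rightarrow> real) \<Rightarrow> nat \<Rightarrow> ('x \<Rightarrow> real) \<Rightarrow> 'x \<Rightarrow> real" where
  "bellman Xs \<psi> Q c t v x = (INF a\<in>\<psi> x. c (x, a) + zeta Xs Q v t (x, a))"

(* cost-to-go with n steps remaining before horizon T *)
primrec ctg_rem :: "(nat \<Rightarrow> 'x set) \<Rightarrow> ('x \<Rightarrow> 'a set) \<Rightarrow> (nat \<Rightarrow> 'x \<times> 'a \<Rightarrow> 'x measure)
    \<Rightarrow> ('x \<times> 'a \<Rightarrow> real) \<Rightarrow> ('x \<Rightarrow> real) \<Rightarrow> nat \<Rightarrow> nat \<Rightarrow> 'x \<Rightarrow> real" where
  "ctg_rem Xs \<psi> Q c h T 0 = h"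
| "ctg_rem Xs \<psi> Q c h T (Suc n) = bellman Xs \<psi> Q c (T - Suc n) (ctg_rem Xs \<psi> Q c h T n)"

definition cost_to_go :: "(nat \<Rightarrow> 'x set) \<Rightarrow> ('x \<Rightarrow> 'a set) \<Rightarrow> (nat \<Rightarrow> 'x \<times> 'a \<Rightarrow> 'x measure)
    \<Rightarrow> ('x \<times> 'a \<Rightarrow> real) \<Rightarrow> ('x \<Rightarrow> real) \<Rightarrow> nat \<Rightarrow> nat \<Rightarrow> 'x \<Rightarrow> real" where
  "cost_to_go Xs \<psi> Q c h T t = ctg_rem Xs \<psi> Q c h T (T - t)"

definition g_comp :: "real \<Rightarrow> real \<Rightarrow> real \<Rightarrow> real" where
  "g_comp lam bi xi = (if xi \<le> bi - 1 / lam then 1 else if xi < bi then - lam * (xi - bi) else 0)"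

definition g_smooth :: "real \<Rightarrow> real^'m \<Rightarrow> real^'m \<Rightarrow> real" where
  "g_smooth lam b x = (\<Prod>i\<in>UNIV. g_comp lam (b $ i) (x $ i))"

definition R_set :: "real \<Rightarrow> real^'m \<Rightarrow> (real^'m) set" where
  "R_set lam b = {x. g_smooth lam b x \<noteq> (if vless x b then 1 else 0)}"

definition h_smooth :: "real \<Rightarrow> real^'m \<Rightarrow> (real^'m \<Rightarrow> real) \<Rightarrow> (real^'m \<Rightarrow> real) \<Rightarrow> real^'m \<Rightarrow> real" where
  "h_smooth lam b f1 f2 x = f1 x * g_smooth lam b x + f2 x * (1 - g_smooth lam b x)"

end

theory Submission
  imports Defs
begin

text \<open>
  The Bellman operator is non-expansive for the sup norm (an infimum of differences is bounded by
  their supremum), so on every stage the two cost-to-go functions differ by at most the largest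
  difference of the one-step integrals at time \<open>T - 1\<close>. The two terminal costs agree outside
  \<open>R\<^sub>\<lambda>\<^sub>,\<^sub>b\<close>, and on it their difference is bounded by \<open>(\<parallel>J\<^sub>T\<parallel>\<^sub>w + \<parallel>J\<^sub>T\<^sup>\<lambda>\<parallel>\<^sub>w) w\<close>, so the tail condition
  (8) bounds that last-step difference by \<open>(\<parallel>J\<^sub>T\<parallel>\<^sub>w + \<parallel>J\<^sub>T\<^sup>\<lambda>\<parallel>\<^sub>w) \<theta>\<close>.

  For the integrals to be meaningful, every \<open>J\<^sub>t\<close> must be measurable. The smoothed cost-to-go
  functions are Lipschitz by (3), (4) and (7), hence measurable; the unsmoothed \<open>J\<^sub>t\<close> is their
  pointwise limit as \<open>\<lambda> \<rightarrow> \<infinity>\<close> by the same estimate, applied backwards in time. No measurable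
  selection is needed.
\<close>

lemma abs_INF_le:
  fixes f :: "'b \<Rightarrow> real"
  assumes "S \<noteq> {}" "\<And>a. a \<in> S \<Longrightarrow> \<bar>f a\<bar> \<le> B"
  shows "\<bar>INF a\<in>S. f a\<bar> \<le> B"
proof -
  obtain a0 where a0: "a0 \<in> S" using assms(1) by blast
  have "bdd_below (f ` S)"
    by (rule bdd_belowI2[of _ "-B"]) (use assms(2) in force)
  then have "(INF a\<in>S. f a) \<le> f a0" by (rule cINF_lower[OF _ a0])
  moreover have "-B \<le> (INF a\<in>S. f a)"
    by (rule cINF_greatest[OF assms(1)]) (use assms(2) in force)
  ultimately show ?thesis using assms(2)[OF a0] by linarith
qed

lemma abs_INF_diff_le:
  fixes f g :: "'b \<Rightarrow> real"
  assumes "S \<noteq> {}" "\<And>a. a \<in> S \<Longrightarrow> \<bar>f a\<bar> \<le> B" "\<And>a. a \<in> S \<Longrightarrow> \<bar>g a\<bar> \<le> B'"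
    and "\<And>a. a \<in> S \<Longrightarrow> \<bar>f a - g a\<bar> \<le> D"
  shows "\<bar>(INF a\<in>S. f a) - (INF a\<in>S. g a)\<bar> \<le> D"
proof -
  have bf: "bdd_below (f ` S)"
    by (rule bdd_belowI2[of _ "-B"]) (use assms(2) in force)
  have bg: "bdd_below (g ` S)"
    by (rule bdd_belowI2[of _ "-B'"]) (use assms(3) in force)
  have "(INF a\<in>S. f a) - D \<le> (INF a\<in>S. g a)"
  proof (rule cINF_greatest[OF assms(1)])
    fix a assume a: "a \<in> S"
    show "(INF a\<in>S. f a) - D \<le> g a" using cINF_lower[OF bf a] assms(4)[OF a] by linarith
  qed
  moreover have "(INF a\<in>S. g a) - D \<le> (INF a\<in>S. f a)"
  proof (rule cINF_greatest[OF assms(1)])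
    fix a assume a: "a \<in> S"
    show "(INF a\<in>S. g a) - D \<le> f a" using cINF_lower[OF bg a] assms(4)[OF a] by linarith
  qed
  ultimately show ?thesis by linarith
qed

lemma cost_bound_components:
  fixes f :: "'b \<Rightarrow> real" and g :: "'c \<Rightarrow> real"
  assumes sum_le: "\<bar>p\<bar> + (SUP y. \<bar>f y\<bar>) + (SUP a\<in>A. \<bar>g a\<bar>) \<le> C"
    and f: "bounded (range f)" and g: "bounded (g ` A)" and A: "A \<noteq> {}"
  shows "\<bar>p\<bar> \<le> C" and "\<bar>f y\<bar> \<le> C" and "a \<in> A \<Longrightarrow> \<bar>g a\<bar> \<le> C"
proof -
  obtain Mf where "\<And>y. \<bar>f y\<bar> \<le> Mf" using f unfolding bounded_iff by auto
  then have f_le: "\<bar>f y\<bar> \<le> (SUP y. \<bar>f y\<bar>)" for y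
    by (intro cSUP_upper bdd_aboveI2) auto
  obtain Mg where "\<And>a. a \<in> A \<Longrightarrow> \<bar>g a\<bar> \<le> Mg" using g unfolding bounded_iff by auto
  then have g_le: "\<bar>g a\<bar> \<le> (SUP a\<in>A. \<bar>g a\<bar>)" if "a \<in> A" for a
    using that by (intro cSUP_upper bdd_aboveI2) auto
  obtain a0 where "a0 \<in> A" using A by blast
  then have "0 \<le> (SUP a\<in>A. \<bar>g a\<bar>)" using g_le[of a0] by linarith
  moreover have "0 \<le> (SUP y. \<bar>f y\<bar>)" using f_le[of undefined] by linarith
  ultimately show "\<bar>p\<bar> \<le> C" "\<bar>f y\<bar> \<le> C" "a \<in> A \<Longrightarrow> \<bar>g a\<bar> \<le> C"
    using sum_le f_le[of y] g_le[of a] by linarith+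
qed

lemma lsc_on_UNIV_borel_measurable:
  assumes "lsc_on UNIV f"
  shows "f \<in> borel_measurable borel"
proof (subst borel_measurable_iff_greater, intro allI)
  fix r
  have "open {x. r < f x}"
  proof (subst open_dist, intro ballI)
    fix p assume "p \<in> {x. r < f x}"
    then obtain d where "d > 0" "\<forall>q. dist q p < d \<longrightarrow> f p - (f p - r) < f q"
      using assms unfolding lsc_on_def by (metis UNIV_I diff_gt_0_iff_gt mem_Collect_eq)
    then show "\<exists>e>0. \<forall>y. dist y p < e \<longrightarrow> y \<in> {x. r < f x}" by auto
  qed
  then show "{x \<in> space borel. r < f x} \<in> sets borel" by simp
qed

lemma hausdist_nearest_point:
  fixes A B :: "'b::metric_space set"
  assumes a: "a \<in> A" and A: "bounded A" and B: "compact B" "B \<noteq> {}"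
  shows "\<exists>b\<in>B. dist a b \<le> hausdist A B"
proof -
  have "continuous_on B (dist a)" by (intro continuous_on_dist continuous_on_const continuous_on_id)
  then obtain b where b: "b \<in> B" "\<forall>z\<in>B. dist a b \<le> dist a z"
    using continuous_attains_inf[OF B] by blast
  have "dist a b \<le> infdist a B"
    unfolding infdist_def using B(2) b(2) by (auto intro!: cINF_greatest)
  also have "infdist a B \<le> (SUP z\<in>A. infdist z B)"
  proof (rule cSUP_upper[OF a])
    obtain x0 e where e: "\<forall>z\<in>A. dist x0 z \<le> e" using A unfolding bounded_def by blast
    show "bdd_above ((\<lambda>z. infdist z B) ` A)"
    proof (rule bdd_aboveI2)
      fix z assume z: "z \<in> A"
      have "infdist z B \<le> dist z b" by (rule infdist_le[OF b(1)])
      also have "\<dots> \<le> dist x0 z + dist x0 b" by (rule dist_triangle3)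
      finally show "infdist z B \<le> e + dist x0 b" using e z by force
    qed
  qed
  also have "\<dots> \<le> hausdist A B" unfolding hausdist_def by simp
  finally show ?thesis using b(1) by blast
qed

text \<open>McShane's extension of a real Lipschitz function to the whole space.\<close>

lemma lipschitz_on_extension:
  fixes f :: "'b::metric_space \<Rightarrow> real"
  assumes L: "L-lipschitz_on S f" and S: "S \<noteq> {}"
  obtains g where "L-lipschitz_on UNIV g" "\<And>x. x \<in> S \<Longrightarrow> g x = f x"
proof -
  have L0: "0 \<le> L" using L by (rule lipschitz_on_nonneg)
  obtain y0 where y0: "y0 \<in> S" using S by blast
  have lip: "\<And>x y. x \<in> S \<Longrightarrow> y \<in> S \<Longrightarrow> \<bar>f x - f y\<bar> \<le> L * dist x y"
    using L by (auto simp: lipschitz_on_def dist_real_def)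
  define g where "g x = (INF y\<in>S. f y + L * dist x y)" for x
  have bdd: "bdd_below ((\<lambda>y. f y + L * dist x y) ` S)" for x
  proof (rule bdd_belowI2[of _ "f y0 - L * dist x y0"])
    fix y assume y: "y \<in> S"
    have "f y0 - f y \<le> L * dist y y0" using lip[OF y0 y] by (simp add: dist_commute)
    moreover have "L * dist y y0 \<le> L * dist x y + L * dist x y0"
      using mult_left_mono[OF dist_triangle3[of y y0 x] L0] by (simp add: algebra_simps dist_commute)
    ultimately show "f y0 - L * dist x y0 \<le> f y + L * dist x y" by linarith
  qed
  have g_le: "g x \<le> f y + L * dist x y" if "y \<in> S" for x y
    unfolding g_def by (rule cINF_lower[OF bdd that])
  have "g x = f x" if x: "x \<in> S" for x
  proof -
    have "f x \<le> g x" unfolding g_def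
      by (rule cINF_greatest[OF S]) (use lip[OF x] in fastforce)
    then show ?thesis using g_le[OF x, of x] by simp
  qed
  moreover have g_g: "g x \<le> g z + L * dist x z" for x z
  proof -
    have "g x - L * dist x z \<le> g z" unfolding g_def[of z]
    proof (rule cINF_greatest[OF S])
      fix y assume y: "y \<in> S"
      have "L * dist x y \<le> L * dist x z + L * dist z y"
        using mult_left_mono[OF dist_triangle[of x y z] L0] by (simp add: algebra_simps)
      then show "g x - L * dist x z \<le> f y + L * dist z y" using g_le[OF y, of x] by linarith
    qed
    then show ?thesis by linarith
  qed
  have "L-lipschitz_on UNIV g"
  proof (rule lipschitz_onI[OF _ L0])
    fix x z :: 'b
    show "dist (g x) (g z) \<le> L * dist x z"
      using g_g[of x z] g_g[of z x] by (simp add: dist_real_def dist_commute abs_le_iff)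
  qed
  ultimately show thesis using that by blast
qed

lemma lipschitz_on_mult_bounded:
  fixes f g :: "'b::metric_space \<Rightarrow> real"
  assumes f: "Lf-lipschitz_on S f" and g: "Lg-lipschitz_on S g"
    and f_le: "\<And>x. x \<in> S \<Longrightarrow> \<bar>f x\<bar> \<le> A" and g_le: "\<And>x. x \<in> S \<Longrightarrow> \<bar>g x\<bar> \<le> B"
    and "0 \<le> A" "0 \<le> B"
  shows "(A * Lg + B * Lf)-lipschitz_on S (\<lambda>x. f x * g x)"
proof (rule lipschitz_onI)
  fix x y assume x: "x \<in> S" and y: "y \<in> S"
  have "f x * g x - f y * g y = f x * (g x - g y) + g y * (f x - f y)" by (simp add: algebra_simps)
  then have "\<bar>f x * g x - f y * g y\<bar> \<le> \<bar>f x\<bar> * \<bar>g x - g y\<bar> + \<bar>g y\<bar> * \<bar>f x - f y\<bar>"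
    by (simp add: abs_mult[symmetric] abs_triangle_ineq)
  also have "\<dots> \<le> A * (Lg * dist x y) + B * (Lf * dist x y)"
    using lipschitz_onD[OF f x y] lipschitz_onD[OF g x y] f_le[OF x] g_le[OF y]
    by (intro add_mono mult_mono) (auto simp: dist_real_def)
  finally show "dist (f x * g x) (f y * g y) \<le> (A * Lg + B * Lf) * dist x y"
    by (simp add: dist_real_def algebra_simps)
next
  show "0 \<le> A * Lg + B * Lf"
    using assms(5,6) lipschitz_on_nonneg[OF f] lipschitz_on_nonneg[OF g] by simp
qed

lemma lipschitz_on_indicator_mult_borel_measurable:
  fixes f :: "'b::metric_space \<Rightarrow> real"
  assumes L: "L-lipschitz_on S f" and S: "S \<in> sets borel"
  shows "(\<lambda>y. indicator S y * f y) \<in> borel_measurable borel"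
proof (cases "S = {}")
  case False
  obtain g where g: "L-lipschitz_on UNIV g" "\<And>x. x \<in> S \<Longrightarrow> g x = f x"
    using lipschitz_on_extension[OF L False] by blast
  have "g \<in> borel_measurable borel"
    by (rule borel_measurable_continuous_onI[OF lipschitz_on_continuous_on[OF g(1)]])
  then have "(\<lambda>y. indicator S y * g y) \<in> borel_measurable borel"
    using S by (intro borel_measurable_times) auto
  moreover have "(\<lambda>y. indicator S y * g y) = (\<lambda>y. indicator S y * f y)"
    using g(2) by (auto simp: indicator_def)
  ultimately show ?thesis by simp
qed simp

locale lipschitz_mdp =
  fixes Xs :: "nat \<Rightarrow> (real^'m) set"
    and \<psi> :: "real^'m \<Rightarrow> 'a::metric_space set"
    and Q :: "nat \<Rightarrow> (real^'m) \<times> 'a \<Rightarrow> (real^'m) measure"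
    and c :: "(real^'m) \<times> 'a \<Rightarrow> real"
    and w :: "real^'m \<Rightarrow> real"
    and T :: nat and L\<psi> Lc Lq cbar dbar :: real
  assumes Xs_borel: "\<And>t. t \<le> T \<Longrightarrow> Xs t \<in> sets borel"
    and \<psi>_nonempty: "\<And>x. \<psi> x \<noteq> {}"
    and \<psi>_compact: "\<And>x. compact (\<psi> x)"
    and L\<psi>_nonneg: "0 \<le> L\<psi>"
    and \<psi>_lipschitz: "\<And>x y. hausdist (\<psi> x) (\<psi> y) \<le> L\<psi> * dist x y"
    and c_lipschitz: "Lc-lipschitz_on {(x, a). a \<in> \<psi> x} c"
    and Q_prob: "\<And>t x a. t < T \<Longrightarrow> a \<in> \<psi> x \<Longrightarrow>
          prob_space (Q t (x,a)) \<and> sets (Q t (x,a)) = sets borel \<and> emeasure (Q t (x,a)) (Xs (Suc t)) = 1"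
    and w_pos: "\<And>x. 0 < w x"
    and w_borel: "w \<in> borel_measurable borel"
    and c_le: "\<And>x a. a \<in> \<psi> x \<Longrightarrow> \<bar>c (x, a)\<bar> \<le> cbar * w x"
    and cbar_nonneg: "0 \<le> cbar" and dbar_nonneg: "0 \<le> dbar" and Lq_nonneg: "0 \<le> Lq"
    and w_integral_le: "\<And>t x a. t < T \<Longrightarrow> x \<in> Xs t \<Longrightarrow> a \<in> \<psi> x \<Longrightarrow>
          set_nn_integral (Q t (x,a)) (Xs (Suc t)) (\<lambda>y. ennreal (w y)) \<le> ennreal (dbar * w x)"
    and zeta_lipschitz_UNIV: "\<And>t x a y a' v Lv. t < T \<Longrightarrow> x \<in> Xs t \<Longrightarrow> a \<in> \<psi> x \<Longrightarrow>
          y \<in> Xs t \<Longrightarrow> a' \<in> \<psi> y \<Longrightarrow> Lv-lipschitz_on UNIV v \<Longrightarrow>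
          \<bar>zeta Xs Q v t (x,a) - zeta Xs Q v t (y,a')\<bar> \<le> Lq * Lv * (dist x y + dist a a')"
begin

definition J :: "(real^'m \<Rightarrow> real) \<Rightarrow> nat \<Rightarrow> real^'m \<Rightarrow> real" where
  "J u t = cost_to_go Xs \<psi> Q c u T t"

text \<open>
  The Bochner integral in \<^const>\<open>zeta\<close> is \<open>0\<close> for non-integrable integrands, so all estimates
  are stated for value functions that are measurable on \<open>X\<^sub>s\<close> and of growth \<open>O(w)\<close>.
\<close>

definition admissible :: "nat \<Rightarrow> (real^'m \<Rightarrow> real) \<Rightarrow> bool" where
  "admissible s v \<longleftrightarrow> (\<lambda>y. indicator (Xs s) y * v y) \<in> borel_measurable borel
     \<and> (\<exists>C M. 0 \<le> C \<and> 0 \<le> M \<and> (\<forall>y\<in>Xs s. \<bar>v y\<bar> \<le> C * w y + M))"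

lemma J_T [simp]: "J u T = u"
  by (simp add: J_def cost_to_go_def)

lemma J_bellman:
  assumes "t < T"
  shows "J u t = bellman Xs \<psi> Q c t (J u (Suc t))"
proof -
  have "T - t = Suc (T - Suc t)" "T - Suc (T - Suc t) = t" using assms by simp_all
  then show ?thesis unfolding J_def cost_to_go_def by simp
qed

lemma zeta_eq_integral: "zeta Xs Q v t p = integral\<^sup>L (Q t p) (\<lambda>y. indicator (Xs (Suc t)) y * v y)"
  by (simp add: zeta_def set_lebesgue_integral_def)

context
  fixes t x a
  assumes t: "t < T" and a: "a \<in> \<psi> x"
begin

interpretation P: prob_space "Q t (x,a)" using Q_prob[OF t a] by simp

lemma sets_Q: "sets (Q t (x,a)) = sets borel"
  using Q_prob[OF t a] by simp

lemma Xs_Suc_sets_Q: "Xs (Suc t) \<in> sets (Q t (x,a))"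
  using sets_Q Xs_borel[of "Suc t"] t by simp

lemma emeasure_Q_Xs_Suc: "emeasure (Q t (x,a)) (Xs (Suc t)) = 1"
  using Q_prob[OF t a] by simp

lemma borel_measurable_Q_iff: "f \<in> borel_measurable (Q t (x,a)) \<longleftrightarrow> f \<in> borel_measurable borel"
  by (subst measurable_cong_sets[OF sets_Q refl]) (rule refl)

lemma integrable_admissible:
  assumes x: "x \<in> Xs t" and v: "admissible (Suc t) v"
  shows "integrable (Q t (x,a)) (\<lambda>y. indicator (Xs (Suc t)) y * v y)"
proof -
  let ?M = "Q t (x,a)" let ?X = "Xs (Suc t)"
  obtain C M where CM: "0 \<le> C" "0 \<le> M" "\<forall>y\<in>?X. \<bar>v y\<bar> \<le> C * w y + M"
    using v unfolding admissible_def by auto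
  have ind: "indicator ?X \<in> borel_measurable ?M" using Xs_Suc_sets_Q by simp
  have "integrable ?M (\<lambda>y. indicator ?X y * w y)"
  proof (subst integrable_iff_bounded, safe)
    show "(\<lambda>y. indicator ?X y * w y) \<in> borel_measurable ?M"
      unfolding borel_measurable_Q_iff using Xs_borel[of "Suc t"] t w_borel
      by (intro borel_measurable_times) auto
    have "(\<integral>\<^sup>+ y. ennreal (norm (indicator ?X y * w y)) \<partial>?M) = set_nn_integral ?M ?X (\<lambda>y. ennreal (w y))"
      by (intro nn_integral_cong) (auto simp: indicator_def less_imp_le[OF w_pos])
    also have "\<dots> \<le> ennreal (dbar * w x)" by (rule w_integral_le[OF t x a])
    also have "\<dots> < \<infinity>" by simp
    finally show "(\<integral>\<^sup>+ y. ennreal (norm (indicator ?X y * w y)) \<partial>?M) < \<infinity>" .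
  qed
  moreover have "integrable ?M (indicator ?X :: _ \<Rightarrow> real)"
    by (rule P.integrable_const_bound[where B=1]) (auto simp: ind)
  ultimately have "integrable ?M (\<lambda>y. C * (indicator ?X y * w y) + M * indicator ?X y)"
    by auto
  then show ?thesis
  proof (rule Bochner_Integration.integrable_bound)
    show "(\<lambda>y. indicator ?X y * v y) \<in> borel_measurable ?M"
      using v unfolding admissible_def borel_measurable_Q_iff by blast
    show "AE y in ?M. norm (indicator ?X y * v y) \<le> norm (C * (indicator ?X y * w y) + M * indicator ?X y)"
      using CM less_imp_le[OF w_pos] by (auto simp: indicator_def)
  qed
qed

lemma zeta_diff_le_nn_integral:
  assumes x: "x \<in> Xs t" and u: "admissible (Suc t) u" and v: "admissible (Suc t) v"
  shows "ennreal \<bar>zeta Xs Q u t (x,a) - zeta Xs Q v t (x,a)\<bar>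
     \<le> (\<integral>\<^sup>+ y. ennreal (indicator (Xs (Suc t)) y * \<bar>u y - v y\<bar>) \<partial>Q t (x,a))"
proof -
  let ?M = "Q t (x,a)" let ?X = "Xs (Suc t)"
  note int = integrable_admissible[OF x u] integrable_admissible[OF x v]
  have "ennreal \<bar>zeta Xs Q u t (x,a) - zeta Xs Q v t (x,a)\<bar>
      = ennreal (norm (integral\<^sup>L ?M (\<lambda>y. indicator ?X y * u y - indicator ?X y * v y)))"
    unfolding zeta_eq_integral using int by simp
  also have "\<dots> \<le> (\<integral>\<^sup>+ y. ennreal (norm (indicator ?X y * u y - indicator ?X y * v y)) \<partial>?M)"
    by (rule integral_norm_bound_ennreal) (use int in simp)
  also have "\<dots> = (\<integral>\<^sup>+ y. ennreal (indicator ?X y * \<bar>u y - v y\<bar>) \<partial>?M)"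
    by (intro nn_integral_cong) (auto simp: indicator_def)
  finally show ?thesis .
qed

lemma zeta_diff_le_const:
  assumes x: "x \<in> Xs t" and u: "admissible (Suc t) u" and v: "admissible (Suc t) v"
    and D: "\<And>y. y \<in> Xs (Suc t) \<Longrightarrow> \<bar>u y - v y\<bar> \<le> D" and D0: "0 \<le> D"
  shows "\<bar>zeta Xs Q u t (x,a) - zeta Xs Q v t (x,a)\<bar> \<le> D"
proof -
  let ?M = "Q t (x,a)" let ?X = "Xs (Suc t)"
  have "(\<integral>\<^sup>+ y. ennreal (indicator ?X y * \<bar>u y - v y\<bar>) \<partial>?M) \<le> (\<integral>\<^sup>+ y. ennreal D * indicator ?X y \<partial>?M)"
    by (intro nn_integral_mono) (auto simp: indicator_def intro: ennreal_leI D)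
  also have "\<dots> = ennreal D"
    using nn_integral_cmult_indicator[OF Xs_Suc_sets_Q] emeasure_Q_Xs_Suc by simp
  finally have "ennreal \<bar>zeta Xs Q u t (x,a) - zeta Xs Q v t (x,a)\<bar> \<le> ennreal D"
    using zeta_diff_le_nn_integral[OF x u v] by (rule order.trans[rotated])
  then show ?thesis using D0 by (simp add: ennreal_le_iff)
qed

lemma zeta_diff_le_tail:
  assumes x: "x \<in> Xs t" and u: "admissible (Suc t) u" and v: "admissible (Suc t) v"
    and R: "R \<in> sets borel" and N: "0 \<le> N" and \<theta>: "0 \<le> \<theta>"
    and D: "\<And>y. y \<in> Xs (Suc t) \<Longrightarrow> \<bar>u y - v y\<bar> \<le> N * w y * indicator R y"
    and tail: "set_nn_integral (Q t (x,a)) R (\<lambda>y. ennreal (w y)) \<le> ennreal \<theta>"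
  shows "\<bar>zeta Xs Q u t (x,a) - zeta Xs Q v t (x,a)\<bar> \<le> N * \<theta>"
proof -
  let ?M = "Q t (x,a)" let ?X = "Xs (Suc t)"
  have wR: "(\<lambda>y. ennreal (w y) * indicator R y) \<in> borel_measurable ?M"
    using w_borel R by (simp add: borel_measurable_Q_iff)
  have "(\<integral>\<^sup>+ y. ennreal (indicator ?X y * \<bar>u y - v y\<bar>) \<partial>?M)
      \<le> (\<integral>\<^sup>+ y. ennreal N * (ennreal (w y) * indicator R y) \<partial>?M)"
  proof (intro nn_integral_mono)
    fix y
    show "ennreal (indicator ?X y * \<bar>u y - v y\<bar>) \<le> ennreal N * (ennreal (w y) * indicator R y)"
    proof (cases "y \<in> ?X")
      case True
      have "ennreal \<bar>u y - v y\<bar> \<le> ennreal (N * w y * indicator R y)" by (rule ennreal_leI[OF D[OF True]])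
      also have "\<dots> = ennreal N * (ennreal (w y) * indicator R y)"
        using N less_imp_le[OF w_pos[of y]] by (simp add: ennreal_mult indicator_def)
      finally show ?thesis using True by simp
    qed simp
  qed
  also have "\<dots> = ennreal N * set_nn_integral ?M R (\<lambda>y. ennreal (w y))"
    using nn_integral_cmult[OF wR, of "ennreal N"] by simp
  also have "\<dots> \<le> ennreal (N * \<theta>)"
    using tail N \<theta> by (simp add: mult_left_mono ennreal_mult)
  finally have "ennreal \<bar>zeta Xs Q u t (x,a) - zeta Xs Q v t (x,a)\<bar> \<le> ennreal (N * \<theta>)"
    using zeta_diff_le_nn_integral[OF x u v] by (rule order.trans[rotated])
  then show ?thesis using N \<theta> by (simp add: ennreal_le_iff)
qed

lemma abs_zeta_le:
  assumes x: "x \<in> Xs t" and v: "admissible (Suc t) v" and C: "0 \<le> C" and M: "0 \<le> M"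
    and v_le: "\<And>y. y \<in> Xs (Suc t) \<Longrightarrow> \<bar>v y\<bar> \<le> C * w y + M"
  shows "\<bar>zeta Xs Q v t (x,a)\<bar> \<le> C * dbar * w x + M"
proof -
  let ?M = "Q t (x,a)" let ?X = "Xs (Suc t)"
  have [measurable]: "w \<in> borel_measurable ?M" "?X \<in> sets ?M"
    using w_borel Xs_Suc_sets_Q by (simp_all add: borel_measurable_Q_iff)
  have "ennreal \<bar>zeta Xs Q v t (x,a)\<bar> \<le> (\<integral>\<^sup>+ y. ennreal (norm (indicator ?X y * v y)) \<partial>?M)"
    unfolding zeta_eq_integral real_norm_def[symmetric]
    by (rule integral_norm_bound_ennreal[OF integrable_admissible[OF x v]])
  also have "\<dots> \<le> (\<integral>\<^sup>+ y. ennreal C * (ennreal (w y) * indicator ?X y) + ennreal M * indicator ?X y \<partial>?M)"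
  proof (intro nn_integral_mono)
    fix y
    show "ennreal (norm (indicator ?X y * v y))
        \<le> ennreal C * (ennreal (w y) * indicator ?X y) + ennreal M * indicator ?X y"
    proof (cases "y \<in> ?X")
      case True
      have "ennreal \<bar>v y\<bar> \<le> ennreal (C * w y + M)" by (rule ennreal_leI[OF v_le[OF True]])
      also have "\<dots> = ennreal C * ennreal (w y) + ennreal M"
        using C M less_imp_le[OF w_pos[of y]] by (simp add: ennreal_mult ennreal_plus)
      finally show ?thesis using True by simp
    qed simp
  qed
  also have "\<dots> = ennreal C * set_nn_integral ?M ?X (\<lambda>y. ennreal (w y)) + ennreal M * emeasure ?M ?X"
    by (simp add: nn_integral_add nn_integral_cmult nn_integral_cmult_indicator[OF Xs_Suc_sets_Q])
  also have "\<dots> \<le> ennreal C * ennreal (dbar * w x) + ennreal M"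
    using w_integral_le[OF t x a] emeasure_Q_Xs_Suc by (simp add: mult_left_mono)
  also have "\<dots> = ennreal (C * dbar * w x + M)"
    using C M dbar_nonneg less_imp_le[OF w_pos[of x]] by (simp add: ennreal_mult ennreal_plus mult.assoc)
  finally have "ennreal \<bar>zeta Xs Q v t (x,a)\<bar> \<le> ennreal (C * dbar * w x + M)" .
  moreover have "0 \<le> C * dbar * w x + M" using C M dbar_nonneg less_imp_le[OF w_pos[of x]] by simp
  ultimately show ?thesis using ennreal_le_iff by blast
qed

end

lemma abs_bellman_summand_le:
  assumes t: "t < T" and x: "x \<in> Xs t" and a: "a \<in> \<psi> x" and v: "admissible (Suc t) v"
    and C: "0 \<le> C" and M: "0 \<le> M" and v_le: "\<And>y. y \<in> Xs (Suc t) \<Longrightarrow> \<bar>v y\<bar> \<le> C * w y + M"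
  shows "\<bar>c (x,a) + zeta Xs Q v t (x,a)\<bar> \<le> (cbar + C * dbar) * w x + M"
  using c_le[OF a] abs_zeta_le[OF t a x v C M v_le] by (simp add: algebra_simps)

lemma admissible_bellman:
  assumes t: "t < T" and v: "admissible (Suc t) v"
    and meas: "(\<lambda>y. indicator (Xs t) y * bellman Xs \<psi> Q c t v y) \<in> borel_measurable borel"
  shows "admissible t (bellman Xs \<psi> Q c t v)"
proof -
  obtain C M where CM: "0 \<le> C" "0 \<le> M" "\<forall>y\<in>Xs (Suc t). \<bar>v y\<bar> \<le> C * w y + M"
    using v unfolding admissible_def by auto
  have "\<bar>bellman Xs \<psi> Q c t v x\<bar> \<le> (cbar + C * dbar) * w x + M" if "x \<in> Xs t" for x
    unfolding bellman_def
    by (rule abs_INF_le[OF \<psi>_nonempty abs_bellman_summand_le[OF t that _ v CM(1,2)]]) (use CM(3) in auto)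
  moreover have "0 \<le> cbar + C * dbar" using cbar_nonneg dbar_nonneg CM(1) by simp
  ultimately show ?thesis unfolding admissible_def using meas CM(2) by blast
qed

lemma bellman_diff_le:
  assumes t: "t < T" and x: "x \<in> Xs t" and u: "admissible (Suc t) u" and v: "admissible (Suc t) v"
    and D: "\<And>a. a \<in> \<psi> x \<Longrightarrow> \<bar>zeta Xs Q u t (x,a) - zeta Xs Q v t (x,a)\<bar> \<le> D"
  shows "\<bar>bellman Xs \<psi> Q c t u x - bellman Xs \<psi> Q c t v x\<bar> \<le> D"
proof -
  obtain C M where CM: "0 \<le> C" "0 \<le> M" "\<forall>y\<in>Xs (Suc t). \<bar>u y\<bar> \<le> C * w y + M"
    using u unfolding admissible_def by auto
  obtain C' M' where CM': "0 \<le> C'" "0 \<le> M'" "\<forall>y\<in>Xs (Suc t). \<bar>v y\<bar> \<le> C' * w y + M'"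
    using v unfolding admissible_def by auto
  show ?thesis unfolding bellman_def
    by (rule abs_INF_diff_le[OF \<psi>_nonempty abs_bellman_summand_le[OF t x _ u CM(1,2)]
          abs_bellman_summand_le[OF t x _ v CM'(1,2)]])
       (use CM(3) CM'(3) D in auto)
qed

text \<open>Non-expansiveness of the Bellman operator propagates a last-step error unchanged.\<close>

lemma J_diff_le_last_step:
  assumes adm: "\<And>s. t < s \<Longrightarrow> s \<le> T \<Longrightarrow> admissible s (J u s) \<and> admissible s (J v s)"
    and t: "t < T"
    and last: "\<And>x a. x \<in> Xs (T - 1) \<Longrightarrow> a \<in> \<psi> x \<Longrightarrow>
        \<bar>zeta Xs Q u (T - 1) (x,a) - zeta Xs Q v (T - 1) (x,a)\<bar> \<le> D"
    and D0: "0 \<le> D"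
  shows "\<forall>x\<in>Xs t. \<bar>J u t x - J v t x\<bar> \<le> D"
proof -
  have "t \<le> T - 1" using t by simp
  then show ?thesis
  proof (induction rule: inc_induct)
    case base
    have T1: "T - 1 < T" and ST: "Suc (T - 1) = T" using t by auto
    have "admissible T u" "admissible T v" using adm[of T] t by auto
    then show ?case
      unfolding J_bellman[OF T1] ST J_T using bellman_diff_le[OF T1] last ST by metis
  next
    case (step n)
    have n: "n < T" and sT: "t < Suc n" "Suc n \<le> T" using step.hyps t by auto
    note adm_Suc = adm[OF sT, THEN conjunct1] adm[OF sT, THEN conjunct2]
    show ?case
      unfolding J_bellman[OF n]
      using bellman_diff_le[OF n _ adm_Suc] zeta_diff_le_const[OF n _ _ adm_Suc] step.IH D0
      by metis
  qed
qed

lemma zeta_lipschitz: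
  assumes t: "t < T" and L: "L-lipschitz_on (Xs (Suc t)) v" and x: "x \<in> Xs t" and y: "y \<in> Xs t"
    and a: "a \<in> \<psi> x" and a': "a' \<in> \<psi> y"
  shows "\<bar>zeta Xs Q v t (x,a) - zeta Xs Q v t (y,a')\<bar> \<le> Lq * L * (dist x y + dist a a')"
proof (cases "Xs (Suc t) = {}")
  case True
  then show ?thesis
    using lipschitz_on_nonneg[OF L] Lq_nonneg by (simp add: zeta_eq_integral)
next
  case False
  obtain g where g: "L-lipschitz_on UNIV g" "\<And>y. y \<in> Xs (Suc t) \<Longrightarrow> g y = v y"
    using lipschitz_on_extension[OF L False] by blast
  have "zeta Xs Q v t p = zeta Xs Q g t p" for p
    unfolding zeta_eq_integral using g(2) by (intro Bochner_Integration.integral_cong) (auto simp: indicator_def)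
  then show ?thesis using zeta_lipschitz_UNIV[OF t x a y a' g(1)] by simp
qed

lemma c_dist_le:
  assumes a: "a \<in> \<psi> x" and a': "a' \<in> \<psi> y"
  shows "\<bar>c (x,a) - c (y,a')\<bar> \<le> Lc * (dist x y + dist a a')"
proof -
  have "dist (c (x,a)) (c (y,a')) \<le> Lc * dist (x,a) (y,a')"
    by (rule lipschitz_onD[OF c_lipschitz]) (use a a' in auto)
  also have "\<dots> \<le> Lc * (dist x y + dist a a')"
    using sqrt_sum_squares_le_sum_abs[of "dist x y" "dist a a'"] lipschitz_on_nonneg[OF c_lipschitz]
    by (intro mult_left_mono) (simp_all add: dist_Pair_Pair)
  finally show ?thesis by (simp add: dist_real_def)
qed

lemma bellman_lipschitz:
  assumes t: "t < T" and v: "admissible (Suc t) v" and L: "L-lipschitz_on (Xs (Suc t)) v"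
  shows "((Lc + Lq * L) * (1 + L\<psi>))-lipschitz_on (Xs t) (bellman Xs \<psi> Q c t v)"
proof -
  obtain C M where CM: "0 \<le> C" "0 \<le> M" "\<forall>y\<in>Xs (Suc t). \<bar>v y\<bar> \<le> C * w y + M"
    using v unfolding admissible_def by auto
  define K where "K = Lc + Lq * L"
  have K: "0 \<le> K"
    unfolding K_def using lipschitz_on_nonneg[OF L] lipschitz_on_nonneg[OF c_lipschitz] Lq_nonneg by simp
  let ?F = "\<lambda>x a. c (x,a) + zeta Xs Q v t (x,a)"
  let ?B = "bellman Xs \<psi> Q c t v"
  have one_sided: "?B y \<le> ?B x + K * (1 + L\<psi>) * dist x y" if x: "x \<in> Xs t" and y: "y \<in> Xs t" for x y
  proof -
    have "?B y - K * (1 + L\<psi>) * dist x y \<le> ?B x"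
      unfolding bellman_def[of _ _ _ _ _ _ x]
    proof (rule cINF_greatest[OF \<psi>_nonempty])
      fix a assume a: "a \<in> \<psi> x"
      obtain a' where a': "a' \<in> \<psi> y" "dist a a' \<le> hausdist (\<psi> x) (\<psi> y)"
        using hausdist_nearest_point[OF a compact_imp_bounded[OF \<psi>_compact] \<psi>_compact \<psi>_nonempty] by blast
      have "bdd_below (?F y ` \<psi> y)"
        by (rule bdd_belowI2[of _ "- ((cbar + C * dbar) * w y + M)"])
           (use abs_bellman_summand_le[OF t y _ v CM(1,2)] CM(3) in force)
      then have "?B y \<le> ?F y a'"
        unfolding bellman_def by (rule cINF_lower[OF _ a'(1)])
      also have "\<dots> \<le> ?F x a + K * (dist x y + dist a a')"
        using c_dist_le[OF a a'(1)] zeta_lipschitz[OF t L x y a a'(1)]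
        unfolding K_def by (simp add: algebra_simps abs_le_iff)
      also have "K * (dist x y + dist a a') \<le> K * (1 + L\<psi>) * dist x y"
        using mult_left_mono[OF order.trans[OF a'(2) \<psi>_lipschitz] K] by (simp add: algebra_simps)
      finally show "?B y - K * (1 + L\<psi>) * dist x y \<le> ?F x a" by simp
    qed
    then show ?thesis by simp
  qed
  show ?thesis unfolding K_def[symmetric]
  proof (rule lipschitz_onI)
    fix x y assume "x \<in> Xs t" "y \<in> Xs t"
    then show "dist (?B x) (?B y) \<le> K * (1 + L\<psi>) * dist x y"
      using one_sided[of x y] one_sided[of y x] by (simp add: dist_real_def dist_commute abs_le_iff)
  qed (use K L\<psi>_nonneg in simp)
qed

lemma admissible_lipschitz_J:
  assumes u: "Lu-lipschitz_on UNIV u" and C: "0 \<le> C" and M: "0 \<le> M"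
    and u_le: "\<And>y. \<bar>u y\<bar> \<le> C * w y + M" and s: "s \<le> T"
  shows "admissible s (J u s) \<and> (\<exists>L. L-lipschitz_on (Xs s) (J u s))"
  using s
proof (induction rule: inc_induct)
  case base
  have "Lu-lipschitz_on (Xs T) u" using u by (rule lipschitz_on_subset) simp
  moreover have "admissible T u" unfolding admissible_def
    using borel_measurable_continuous_onI[OF lipschitz_on_continuous_on[OF u]] Xs_borel[of T] C M u_le
    by (intro conjI) (auto intro!: borel_measurable_times)
  ultimately show ?case by auto
next
  case (step n)
  have n: "n < T" using step.hyps by simp
  from step.IH obtain L where adm: "admissible (Suc n) (J u (Suc n))"
    and L: "L-lipschitz_on (Xs (Suc n)) (J u (Suc n))" by blast
  have lip: "((Lc + Lq * L) * (1 + L\<psi>))-lipschitz_on (Xs n) (J u n)"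
    unfolding J_bellman[OF n] by (rule bellman_lipschitz[OF n adm L])
  have "admissible n (J u n)"
    using admissible_bellman[OF n adm] lipschitz_on_indicator_mult_borel_measurable[OF lip Xs_borel[of n]] n
    by (simp add: J_bellman[OF n])
  then show ?case using lip by blast
qed

end

lemma wnorm_nonneg:
  assumes "\<And>x. 0 \<le> w x"
  shows "0 \<le> wnorm w v"
  unfolding wnorm_def using assms by (intro SUP_upper2[of undefined]) auto

lemma abs_le_wnorm_mult:
  assumes "0 < w y" "wnorm w v = ereal n"
  shows "\<bar>v y\<bar> \<le> n * w y"
proof -
  have "ereal (\<bar>v y\<bar> / w y) \<le> wnorm w v" unfolding wnorm_def by (rule SUP_upper) simp
  then show ?thesis using assms by (simp add: divide_le_eq)
qed

lemma g_comp_eq_clamp: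
  assumes "0 < lam"
  shows "g_comp lam bi xi = max 0 (min 1 (lam * (bi - xi)))"
proof -
  have "xi \<le> bi - 1 / lam \<longleftrightarrow> 1 \<le> lam * (bi - xi)" using assms by (simp add: field_simps)
  moreover have "xi < bi \<longleftrightarrow> 0 < lam * (bi - xi)" using assms by (simp add: zero_less_mult_iff)
  ultimately show ?thesis unfolding g_comp_def by (auto simp: max_def min_def algebra_simps)
qed

lemma g_smooth_bounds:
  assumes "0 < lam"
  shows "0 \<le> g_smooth lam b x" "g_smooth lam b x \<le> 1"
  unfolding g_smooth_def using g_comp_eq_clamp[OF assms]
  by (auto intro!: prod_nonneg prod_le_1)

lemma g_smooth_lipschitz:
  assumes lam: "0 < lam"
  shows "(lam * real CARD('m))-lipschitz_on UNIV (g_smooth lam (b::real^'m))"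
proof (rule lipschitz_onI)
  fix x y :: "real^'m"
  have "\<bar>g_smooth lam b x - g_smooth lam b y\<bar>
      \<le> (\<Sum>i\<in>UNIV. \<bar>g_comp lam (b$i) (x$i) - g_comp lam (b$i) (y$i)\<bar>)"
    unfolding g_smooth_def
    using norm_prod_diff[of UNIV "\<lambda>i. g_comp lam (b$i) (x$i)" "\<lambda>i. g_comp lam (b$i) (y$i)"]
    by (auto simp: g_comp_eq_clamp[OF lam])
  also have "\<dots> \<le> (\<Sum>i\<in>(UNIV::'m set). lam * dist x y)"
  proof (rule sum_mono)
    fix i
    have "\<bar>g_comp lam (b$i) (x$i) - g_comp lam (b$i) (y$i)\<bar> \<le> \<bar>lam * (b$i - x$i) - lam * (b$i - y$i)\<bar>"
      unfolding g_comp_eq_clamp[OF lam] by (auto simp: max_def min_def)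
    also have "lam * (b$i - x$i) - lam * (b$i - y$i) = lam * (y$i - x$i)" by (simp add: algebra_simps)
    also have "\<bar>lam * (y$i - x$i)\<bar> = lam * \<bar>(x - y) $ i\<bar>" using lam by (simp add: abs_mult abs_minus_commute)
    also have "\<dots> \<le> lam * dist x y"
      using lam component_le_norm_cart[of "x - y" i] by (simp add: dist_norm)
    finally show "\<bar>g_comp lam (b$i) (x$i) - g_comp lam (b$i) (y$i)\<bar> \<le> lam * dist x y" .
  qed
  finally show "dist (g_smooth lam b x) (g_smooth lam b y) \<le> lam * real CARD('m) * dist x y"
    by (simp add: dist_real_def mult_ac)
qed (use lam in simp)

lemma h_smooth_lipschitz:
  fixes b :: "real^'m"
  assumes lam: "0 < lam" and f1: "L1-lipschitz_on UNIV f1" and f2: "L2-lipschitz_on UNIV f2"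
    and f1_le: "\<And>y. \<bar>f1 y\<bar> \<le> B" and f2_le: "\<And>y. \<bar>f2 y\<bar> \<le> B"
  shows "\<exists>L. L-lipschitz_on UNIV (h_smooth lam b f1 f2)"
proof -
  have "h_smooth lam b f1 f2 = (\<lambda>x. f2 x + (f1 x - f2 x) * g_smooth lam b x)"
    unfolding h_smooth_def by (simp add: algebra_simps)
  moreover have "(2 * B * (lam * real CARD('m)) + 1 * (L1 + L2))-lipschitz_on UNIV
      (\<lambda>x. (f1 x - f2 x) * g_smooth lam b x)"
  proof (rule lipschitz_on_mult_bounded[OF lipschitz_on_diff[OF f1 f2] g_smooth_lipschitz[OF lam]])
    show "\<bar>f1 x - f2 x\<bar> \<le> 2 * B" for x using f1_le[of x] f2_le[of x] by linarith
    show "\<bar>g_smooth lam b x\<bar> \<le> 1" for x using g_smooth_bounds[OF lam, of b x] by simp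
    show "0 \<le> 2 * B" using f1_le[of undefined] by linarith
  qed simp
  ultimately show ?thesis using lipschitz_on_add[OF f2] by metis
qed

lemma abs_h_smooth_le:
  assumes lam: "0 < lam" and f1_le: "\<And>y. \<bar>f1 y\<bar> \<le> B" and f2_le: "\<And>y. \<bar>f2 y\<bar> \<le> B"
  shows "\<bar>h_smooth lam b f1 f2 x\<bar> \<le> B"
proof -
  have g: "0 \<le> g_smooth lam b x" "0 \<le> 1 - g_smooth lam b x" using g_smooth_bounds[OF lam] by auto
  have "\<bar>h_smooth lam b f1 f2 x\<bar> \<le> \<bar>f1 x\<bar> * g_smooth lam b x + \<bar>f2 x\<bar> * (1 - g_smooth lam b x)"
    unfolding h_smooth_def using g by (metis abs_mult abs_of_nonneg abs_triangle_ineq)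
  also have "\<dots> \<le> B * g_smooth lam b x + B * (1 - g_smooth lam b x)"
    using g f1_le[of x] f2_le[of x] by (intro add_mono mult_right_mono) auto
  finally show ?thesis by (simp add: algebra_simps)
qed

lemma h_smooth_outside_R_set:
  assumes "x \<notin> R_set lam b"
  shows "h_smooth lam b f1 f2 x = (if vless x b then f1 x else f2 x)"
  using assms unfolding R_set_def h_smooth_def by (auto split: if_splits)

lemma open_vless: "open {x. vless x (b::real^'m)}"
proof -
  have "{x. vless x b} = (\<Inter>i. {x::real^'m. x$i < b$i})" by (auto simp: vless_def)
  then show ?thesis by (auto intro!: open_INT open_halfspace_component_lt_cart)
qed

lemma R_set_borel:
  assumes lam: "0 < lam"
  shows "R_set lam (b::real^'m) \<in> sets borel"
proof -
  have [measurable]: "g_smooth lam b \<in> borel_measurable borel"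
    by (rule borel_measurable_continuous_onI[OF lipschitz_on_continuous_on[OF g_smooth_lipschitz[OF lam]]])
  have [measurable]: "{x. vless x b} \<in> sets borel" by (rule borel_open[OF open_vless])
  have "R_set lam b = {x \<in> space borel. g_smooth lam b x \<noteq> (if x \<in> {x. vless x b} then 1 else 0)}"
    unfolding R_set_def by simp
  also have "\<dots> \<in> sets borel" by measurable
  finally show ?thesis .
qed

locale smoothed_mdp = lipschitz_mdp Xs \<psi> Q c w T L\<psi> Lc Lq cbar dbar
  for Xs :: "nat \<Rightarrow> (real^'m) set"
    and \<psi> :: "real^'m \<Rightarrow> 'a::metric_space set"
    and Q c w T L\<psi> Lc Lq cbar dbar +
  fixes h1 f1 f2 :: "real^'m \<Rightarrow> real" and b :: "real^'m" and Lh1 Lf1 Lf2 B :: real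
  assumes h1_lipschitz: "Lh1-lipschitz_on UNIV h1"
    and f1_lipschitz: "Lf1-lipschitz_on UNIV f1" and f1_le: "\<And>y. \<bar>f1 y\<bar> \<le> B"
    and f2_lipschitz: "Lf2-lipschitz_on UNIV f2" and f2_le: "\<And>y. \<bar>f2 y\<bar> \<le> B"
    and h1_le: "\<And>x. \<bar>h1 x\<bar> \<le> cbar * w x"
    and step_le: "\<And>x y. \<bar>if vless y b then f1 y else f2 y\<bar> \<le> cbar * w x"
    and tail: "\<And>\<theta>. 0 < \<theta> \<Longrightarrow> \<exists>\<Lambda>. \<forall>lam>\<Lambda>.
          (SUP p\<in>{(x, a). a \<in> \<psi> x}. set_nn_integral (Q (T - 1) p) (R_set lam b) (\<lambda>y. ennreal (w y)))
            < ennreal \<theta>"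
begin

lemma tail_le:
  assumes "0 < \<theta>"
  obtains \<Lambda> where "\<And>lam x a. lam > \<Lambda> \<Longrightarrow> a \<in> \<psi> x \<Longrightarrow>
    set_nn_integral (Q (T - 1) (x,a)) (R_set lam b) (\<lambda>y. ennreal (w y)) \<le> ennreal \<theta>"
proof -
  obtain \<Lambda> where \<Lambda>: "\<forall>lam>\<Lambda>.
      (SUP p\<in>{(x, a). a \<in> \<psi> x}. set_nn_integral (Q (T - 1) p) (R_set lam b) (\<lambda>y. ennreal (w y)))
        < ennreal \<theta>"
    using tail[OF assms] by blast
  have "set_nn_integral (Q (T - 1) (x,a)) (R_set lam b) (\<lambda>y. ennreal (w y)) \<le> ennreal \<theta>"
    if "lam > \<Lambda>" "a \<in> \<psi> x" for lam x a
    using SUP_upper[of "(x, a)" "{(x, a). a \<in> \<psi> x}"] \<Lambda> that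
    by (fastforce intro: order.trans[OF _ less_imp_le])
  then show thesis using that by blast
qed

definition h_disc :: "real^'m \<Rightarrow> real" where
  "h_disc x = h1 x + (if vless x b then f1 x else f2 x)"

definition h_smoothed :: "real \<Rightarrow> real^'m \<Rightarrow> real" where
  "h_smoothed lam x = h1 x + h_smooth lam b f1 f2 x"

lemma abs_h_smooth_le_B: "0 < lam \<Longrightarrow> \<bar>h_smooth lam b f1 f2 x\<bar> \<le> B"
  by (rule abs_h_smooth_le) (simp_all add: f1_le f2_le)

lemma admissible_J_h_smoothed:
  assumes lam: "0 < lam" and s: "s \<le> T"
  shows "admissible s (J (h_smoothed lam) s)"
proof -
  obtain L where "L-lipschitz_on UNIV (h_smooth lam b f1 f2)"
    using h_smooth_lipschitz[OF lam f1_lipschitz f2_lipschitz f1_le f2_le] by blast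
  then have lip: "(Lh1 + L)-lipschitz_on UNIV (h_smoothed lam)"
    unfolding h_smoothed_def[abs_def] by (rule lipschitz_on_add[OF h1_lipschitz])
  have "\<bar>h_smoothed lam y\<bar> \<le> cbar * w y + B" for y
    using h1_le[of y] abs_h_smooth_le_B[OF lam, of y] unfolding h_smoothed_def by linarith
  moreover have "0 \<le> B" using f1_le[of undefined] by linarith
  ultimately show ?thesis using admissible_lipschitz_J[OF lip cbar_nonneg _ _ s] by blast
qed

lemma admissible_h_disc: "admissible T h_disc"
proof -
  have [measurable]: "{x. vless x b} \<in> sets borel" by (rule borel_open[OF open_vless])
  have [measurable]: "h1 \<in> borel_measurable borel" "f1 \<in> borel_measurable borel" "f2 \<in> borel_measurable borel"
    using h1_lipschitz f1_lipschitz f2_lipschitz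
    by (auto intro: borel_measurable_continuous_onI lipschitz_on_continuous_on)
  have "h_disc = (\<lambda>x. h1 x + (if x \<in> {x. vless x b} then f1 x else f2 x))"
    unfolding h_disc_def[abs_def] by simp
  moreover have "(\<lambda>x. h1 x + (if x \<in> {x. vless x b} then f1 x else f2 x)) \<in> borel_measurable borel"
    by measurable
  ultimately have "h_disc \<in> borel_measurable borel" by simp
  moreover have "\<bar>h_disc y\<bar> \<le> (2 * cbar) * w y + 0" for y
    using h1_le[of y] step_le[where x=y and y=y] unfolding h_disc_def by linarith
  ultimately show ?thesis
    unfolding admissible_def using Xs_borel[of T] cbar_nonneg
    by (intro conjI exI[of _ "2 * cbar"] exI[of _ 0]) (auto intro!: borel_measurable_times)
qed

lemma h_smoothed_eq_h_disc: "y \<notin> R_set lam b \<Longrightarrow> h_smoothed lam y = h_disc y"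
  unfolding h_smoothed_def h_disc_def by (simp add: h_smooth_outside_R_set)

lemma abs_h_smoothed_diff_le: "0 < lam \<Longrightarrow> \<bar>h_smoothed lam y - h_disc y\<bar> \<le> 2 * B"
  using abs_h_smooth_le_B[of lam y] f1_le[of y] f2_le[of y]
  unfolding h_smoothed_def h_disc_def by (auto simp: abs_le_iff)

lemma J_h_smoothed_diff_le:
  assumes lam: "0 < lam" and t: "t < T"
    and adm: "\<And>s. t < s \<Longrightarrow> s \<le> T \<Longrightarrow> admissible s (J h_disc s)"
    and N: "0 \<le> N" and \<theta>: "0 \<le> \<theta>"
    and diff: "\<And>y. y \<in> R_set lam b \<Longrightarrow> \<bar>h_smoothed lam y - h_disc y\<bar> \<le> N * w y"
    and tail_lam: "\<And>x a. a \<in> \<psi> x \<Longrightarrow>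
          set_nn_integral (Q (T - 1) (x,a)) (R_set lam b) (\<lambda>y. ennreal (w y)) \<le> ennreal \<theta>"
  shows "\<forall>x\<in>Xs t. \<bar>J (h_smoothed lam) t x - J h_disc t x\<bar> \<le> N * \<theta>"
proof (rule J_diff_le_last_step[OF _ t])
  have T1: "T - 1 < T" and ST: "Suc (T - 1) = T" using t by auto
  have diff_R: "\<bar>h_smoothed lam y - h_disc y\<bar> \<le> N * w y * indicator (R_set lam b) y" for y
    using diff[of y] h_smoothed_eq_h_disc[of y lam] by (cases "y \<in> R_set lam b") auto
  have "admissible (Suc (T - 1)) (h_smoothed lam)" "admissible (Suc (T - 1)) h_disc"
    unfolding ST using admissible_J_h_smoothed[OF lam order_refl] admissible_h_disc by simp_all
  then show "\<bar>zeta Xs Q (h_smoothed lam) (T - 1) (x,a) - zeta Xs Q h_disc (T - 1) (x,a)\<bar> \<le> N * \<theta>"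
    if "x \<in> Xs (T - 1)" "a \<in> \<psi> x" for x a
    by (rule zeta_diff_le_tail[OF T1 that(2,1) _ _ R_set_borel[OF lam] N \<theta> diff_R tail_lam[OF that(2)]])
qed (use admissible_J_h_smoothed[OF lam] adm N \<theta> in auto)

text \<open>
  A positive lower bound on \<open>w\<close> turns the tail condition into smallness of
  \<open>Q\<^sub>T\<^sub>-\<^sub>1(R\<^sub>\<lambda>\<^sub>,\<^sub>b)\<close>, on which the bounded difference of the terminal costs lives. Unless
  the discontinuous part of \<open>h\<close> vanishes, the cost bound in (4) provides one.
\<close>

context
  fixes \<delta> :: real
  assumes \<delta>: "0 < \<delta>" and w_ge: "\<And>x. \<delta> \<le> w x"
begin

lemma J_h_smoothed_approx:
  assumes n: "n < T" and adm: "\<And>s. n < s \<Longrightarrow> s \<le> T \<Longrightarrow> admissible s (J h_disc s)" and \<epsilon>: "0 < \<epsilon>"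
  shows "\<exists>lam>0. \<forall>x\<in>Xs n. \<bar>J (h_smoothed lam) n x - J h_disc n x\<bar> \<le> \<epsilon>"
proof -
  define N where "N = 2 * B / \<delta>"
  have N: "0 \<le> N" unfolding N_def using \<delta> f1_le[of undefined] by simp
  define \<theta> where "\<theta> = \<epsilon> / (N + 1)"
  have \<theta>: "0 < \<theta>" unfolding \<theta>_def using \<epsilon> N by simp
  obtain \<Lambda> where \<Lambda>: "\<And>lam x a. lam > \<Lambda> \<Longrightarrow> a \<in> \<psi> x \<Longrightarrow>
      set_nn_integral (Q (T - 1) (x,a)) (R_set lam b) (\<lambda>y. ennreal (w y)) \<le> ennreal \<theta>"
    using tail_le[OF \<theta>] by blast
  define lam where "lam = max \<Lambda> 0 + 1"
  have lam: "0 < lam" "\<Lambda> < lam" unfolding lam_def by auto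
  have B_le: "2 * B \<le> N * w y" for y
    using mult_left_mono[OF w_ge[of y], of N] N \<delta> unfolding N_def by simp
  have "\<bar>h_smoothed lam y - h_disc y\<bar> \<le> N * w y" for y
    using abs_h_smoothed_diff_le[OF lam(1), of y] B_le[of y] by linarith
  then have "\<forall>x\<in>Xs n. \<bar>J (h_smoothed lam) n x - J h_disc n x\<bar> \<le> N * \<theta>"
    using J_h_smoothed_diff_le[OF lam(1) n adm N less_imp_le[OF \<theta>] _ \<Lambda>[OF lam(2)]] by blast
  moreover have "N * \<theta> \<le> \<epsilon>"
    unfolding \<theta>_def using N \<epsilon> by (simp add: field_simps)
  ultimately show ?thesis using lam(1) by force
qed

lemma borel_measurable_J_h_disc:
  assumes n: "n < T" and adm: "\<And>s. n < s \<Longrightarrow> s \<le> T \<Longrightarrow> admissible s (J h_disc s)"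
  shows "(\<lambda>y. indicator (Xs n) y * J h_disc n y) \<in> borel_measurable borel"
proof -
  have "\<exists>lam>0. \<forall>x\<in>Xs n. \<bar>J (h_smoothed lam) n x - J h_disc n x\<bar> \<le> inverse (real (Suc k))" for k
    by (intro J_h_smoothed_approx[OF n adm] positive_imp_inverse_positive of_nat_0_less_iff[THEN iffD2] zero_less_Suc)
  then obtain lam where lam: "\<And>k. 0 < lam k"
    "\<And>k. \<forall>x\<in>Xs n. \<bar>J (h_smoothed (lam k)) n x - J h_disc n x\<bar> \<le> inverse (real (Suc k))"
    by metis
  show ?thesis
  proof (rule borel_measurable_LIMSEQ_real)
    show "(\<lambda>y. indicator (Xs n) y * J (h_smoothed (lam k)) n y) \<in> borel_measurable borel" for k
      using admissible_J_h_smoothed[OF lam(1) less_imp_le[OF n]] unfolding admissible_def by blast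
    fix y
    show "(\<lambda>k. indicator (Xs n) y * J (h_smoothed (lam k)) n y) \<longlonglongrightarrow> indicator (Xs n) y * J h_disc n y"
    proof (cases "y \<in> Xs n")
      case True
      have "(\<lambda>k. J (h_smoothed (lam k)) n y - J h_disc n y) \<longlonglongrightarrow> 0"
        by (rule Lim_null_comparison[OF _ LIMSEQ_inverse_real_of_nat]) (use lam(2) True in auto)
      then show ?thesis using True by (simp add: LIM_zero_cancel)
    qed simp
  qed
qed

end

lemma admissible_J_h_disc:
  assumes s: "s \<le> T"
  shows "admissible s (J h_disc s)"
proof (cases "\<forall>y. (if vless y b then f1 y else f2 y) = 0")
  case True
  then have "h_disc = h1" unfolding h_disc_def[abs_def] by simp
  then show ?thesis
    using admissible_lipschitz_J[OF h1_lipschitz cbar_nonneg order_refl _ s] h1_le by simp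
next
  case False
  then obtain y0 where y0: "(if vless y0 b then f1 y0 else f2 y0) \<noteq> 0" by blast
  define \<delta> where "\<delta> = \<bar>if vless y0 b then f1 y0 else f2 y0\<bar> / cbar"
  have "0 < cbar * w b" using step_le[where x=b and y=y0] y0 by linarith
  then have cbar: "0 < cbar" using w_pos[of b] by (simp add: zero_less_mult_iff)
  then have \<delta>: "0 < \<delta>" "\<And>x. \<delta> \<le> w x"
    unfolding \<delta>_def using y0 step_le[where y=y0] by (auto simp: divide_le_eq mult.commute)
  have "\<forall>s'. n \<le> s' \<and> s' \<le> T \<longrightarrow> admissible s' (J h_disc s')" if "n \<le> T" for n
    using that
  proof (induction rule: inc_induct)
    case base
    then show ?case using admissible_h_disc by (auto simp: le_antisym)
  next
    case (step n)
    then have n: "n < T" and adm: "\<And>s. n < s \<Longrightarrow> s \<le> T \<Longrightarrow> admissible s (J h_disc s)" by auto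
    have "admissible n (J h_disc n)"
      using admissible_bellman[OF n adm[of "Suc n"]] borel_measurable_J_h_disc[OF \<delta> n adm] n
      by (simp add: J_bellman[OF n])
    then show ?case using adm by (metis le_neq_implies_less)
  qed
  then show ?thesis using s by blast
qed

lemma SUP_J_diff_le_wnorm:
  assumes lam: "0 < lam" and t: "t < T" and \<theta>: "0 < \<theta>"
    and tail_lam: "\<And>x a. a \<in> \<psi> x \<Longrightarrow>
          set_nn_integral (Q (T - 1) (x,a)) (R_set lam b) (\<lambda>y. ennreal (w y)) \<le> ennreal \<theta>"
  shows "(SUP x\<in>Xs t. ereal \<bar>J (h_smoothed lam) t x - J h_disc t x\<bar>)
      \<le> (wnorm w h_disc + wnorm w (h_smoothed lam)) * ereal \<theta>"
proof -
  have nonneg: "0 \<le> wnorm w h_disc" "0 \<le> wnorm w (h_smoothed lam)"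
    using w_pos less_imp_le by (blast intro: wnorm_nonneg)+
  show ?thesis
  proof (cases "wnorm w h_disc = \<infinity> \<or> wnorm w (h_smoothed lam) = \<infinity>")
    case True
    then have "wnorm w h_disc + wnorm w (h_smoothed lam) = \<infinity>" using nonneg by auto
    then have "(wnorm w h_disc + wnorm w (h_smoothed lam)) * ereal \<theta> = \<infinity>" using \<theta> by simp
    then show ?thesis by (metis ereal_less_eq(1))
  next
    case False
    then obtain n1 n2 where n: "wnorm w h_disc = ereal n1" "wnorm w (h_smoothed lam) = ereal n2"
      using nonneg by (cases "wnorm w h_disc"; cases "wnorm w (h_smoothed lam)") auto
    have "\<bar>h_smoothed lam y - h_disc y\<bar> \<le> (n1 + n2) * w y" for y
      using abs_le_wnorm_mult[OF w_pos n(1), of y] abs_le_wnorm_mult[OF w_pos n(2), of y]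
        abs_triangle_ineq4[of "h_smoothed lam y" "h_disc y"]
      by (simp add: algebra_simps)
    moreover have "0 \<le> n1 + n2" using nonneg n by simp
    ultimately have "\<forall>x\<in>Xs t. \<bar>J (h_smoothed lam) t x - J h_disc t x\<bar> \<le> (n1 + n2) * \<theta>"
      using J_h_smoothed_diff_le[OF lam t admissible_J_h_disc _ less_imp_le[OF \<theta>] _ tail_lam] by simp
    then show ?thesis using n by (auto intro!: SUP_least)
  qed
qed

lemma smoothing_error:
  "\<forall>\<theta>>0. \<exists>\<Lambda>::real. \<forall>lam>\<Lambda>. 0 < lam \<longrightarrow> (\<forall>t<T.
      (SUP x\<in>Xs t. ereal \<bar>J (h_smoothed lam) t x - J h_disc t x\<bar>)
      \<le> (wnorm w (J h_disc T) + wnorm w (J (h_smoothed lam) T)) * ereal \<theta>)"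
proof (intro allI impI)
  fix \<theta> :: real assume \<theta>: "0 < \<theta>"
  obtain \<Lambda> where \<Lambda>: "\<And>lam x a. lam > \<Lambda> \<Longrightarrow> a \<in> \<psi> x \<Longrightarrow>
      set_nn_integral (Q (T - 1) (x,a)) (R_set lam b) (\<lambda>y. ennreal (w y)) \<le> ennreal \<theta>"
    using tail_le[OF \<theta>] by blast
  show "\<exists>\<Lambda>::real. \<forall>lam>\<Lambda>. 0 < lam \<longrightarrow> (\<forall>t<T.
      (SUP x\<in>Xs t. ereal \<bar>J (h_smoothed lam) t x - J h_disc t x\<bar>)
      \<le> (wnorm w (J h_disc T) + wnorm w (J (h_smoothed lam) T)) * ereal \<theta>)"
    unfolding J_T using SUP_J_diff_le_wnorm[OF _ _ \<theta> \<Lambda>] by blast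
qed

end

theorem proposition4:
  fixes Xs :: "nat \<Rightarrow> (real^'m) set"
    and \<psi> :: "real^'m \<Rightarrow> 'a::{metric_space, second_countable_topology} set"
    and Q :: "nat \<Rightarrow> (real^'m) \<times> 'a \<Rightarrow> (real^'m) measure"
    and c :: "(real^'m) \<times> 'a \<Rightarrow> real"
    and h h1 h2 f1 f2 w :: "real^'m \<Rightarrow> real"
    and b :: "real^'m"
    and T :: nat
    and L\<psi> Lc Lh1 Lf1 Lf2 Lq cbar dbar :: real
  defines "K \<equiv> {(x, a). a \<in> \<psi> x}"
      and "Kt \<equiv> \<lambda>t. {(x, a). x \<in> Xs t \<and> a \<in> \<psi> x}"
  assumes A_lc: "locally compact (UNIV :: 'a set)"
    and Xs_borel: "\<forall>t\<le>T. Xs t \<in> sets borel"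
    and \<psi>_meas: "\<forall>x. \<psi> x \<in> sets borel"
    and \<psi>_nonempty: "\<forall>x. \<psi> x \<noteq> {}"
    and K_meas: "K \<in> sets borel"
    and Kt_meas: "\<forall>t\<le>T. Kt t \<in> sets borel"
    and Q_prob: "\<forall>t<T. \<forall>p\<in>K. prob_space (Q t p) \<and> sets (Q t p) = sets borel
                      \<and> emeasure (Q t p) (Xs (Suc t)) = 1"
    and Q_meas: "\<forall>t<T. Q t \<in> measurable (restrict_space borel K) (subprob_algebra borel)"
    and c_meas: "c \<in> borel_measurable (restrict_space borel K)"
    \<comment> \<open>(2)\<close>
    and \<psi>_compact: "\<forall>x. compact (\<psi> x)"
    \<comment> \<open>(3)\<close>
    and L\<psi>_pos: "L\<psi> > 0"
    and \<psi>_lip: "\<forall>x y. hausdist (\<psi> x) (\<psi> y) \<le> L\<psi> * dist x y"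
    \<comment> \<open>(4)\<close>
    and c_lip: "Lc-lipschitz_on K c"
    and h1_lip: "Lh1-lipschitz_on UNIV h1"
    and f1_lip: "Lf1-lipschitz_on UNIV f1" and f1_bdd: "bounded (range f1)"
    and f2_lip: "Lf2-lipschitz_on UNIV f2" and f2_bdd: "bounded (range f2)"
    and h2_def: "\<forall>x. h2 x = (if vless x b then f1 x else f2 x)"
    and h_def: "h = (\<lambda>x. h1 x + h2 x)"
    and w_pos: "\<forall>x. 0 < w x"
    and w_lsc: "lsc_on UNIV w"
    and cbar_pos: "cbar > 0"
    and cost_bound: "\<forall>x. \<bar>h1 x\<bar> + (SUP y. \<bar>h2 y\<bar>) + (SUP a\<in>\<psi> x. \<bar>c (x, a)\<bar>) \<le> cbar * w x"
    \<comment> \<open>(5)\<close>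
    and zeta_w_usc: "\<forall>t<T. usc_on (Kt t) (zeta Xs Q w t)"
    and dbar_pos: "dbar > 0"
    and zeta_w_bound: "\<forall>t<T. \<forall>p\<in>Kt t.
          set_nn_integral (Q t p) (Xs (Suc t)) (\<lambda>y. ennreal (w y)) \<le> ennreal (dbar * w (fst p))"
    \<comment> \<open>(6)\<close>
    and zeta_cont: "\<forall>t<T. \<forall>v::real^'m \<Rightarrow> real. continuous_on UNIV v \<and> bounded (range v)
          \<longrightarrow> continuous_on K (zeta Xs Q v t)"
    \<comment> \<open>(7)\<close>
    and Lq_pos: "Lq > 0"
    and zeta_lip: "\<forall>t<T. \<forall>p\<in>Kt t. \<forall>p'\<in>Kt t. \<forall>(v::real^'m \<Rightarrow> real) Lv. Lv-lipschitz_on UNIV v \<longrightarrow>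
          \<bar>zeta Xs Q v t p - zeta Xs Q v t p'\<bar> \<le> Lq * Lv * (dist (fst p) (fst p') + dist (snd p) (snd p'))"
    \<comment> \<open>(8)\<close>
    and tail: "\<forall>\<theta>>0. \<exists>\<Lambda>. \<forall>lam>\<Lambda>.
          (SUP p\<in>K. set_nn_integral (Q (T - 1) p) (R_set lam b) (\<lambda>y. ennreal (w y))) < ennreal \<theta>"
  shows "\<forall>\<theta>>0. \<exists>\<Lambda>::real. \<forall>lam>\<Lambda>. 0 < lam \<longrightarrow> (\<forall>t<T.
          (SUP x\<in>Xs t. ereal \<bar>cost_to_go Xs \<psi> Q c (\<lambda>x. h1 x + h_smooth lam b f1 f2 x) T t x
                               - cost_to_go Xs \<psi> Q c h T t x\<bar>)
          \<le> (wnorm w (cost_to_go Xs \<psi> Q c h T T)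
              + wnorm w (cost_to_go Xs \<psi> Q c (\<lambda>x. h1 x + h_smooth lam b f1 f2 x) T T)) * ereal \<theta>)"
proof -
  obtain B1 B2 where "\<And>y. \<bar>f1 y\<bar> \<le> B1" "\<And>y. \<bar>f2 y\<bar> \<le> B2"
    using f1_bdd f2_bdd unfolding bounded_iff by auto
  then have f_le: "\<bar>f1 y\<bar> \<le> max B1 B2" "\<bar>f2 y\<bar> \<le> max B1 B2" for y
    by (auto simp: le_max_iff_disj)
  have h2_bdd: "bounded (range h2)"
    unfolding bounded_iff using f_le h2_def by (intro exI[of _ "max B1 B2"]) auto
  have c_bdd: "bounded ((\<lambda>a. c (x, a)) ` \<psi> x)" for x
  proof -
    have "continuous_on (\<psi> x) (Pair x)" by (intro continuous_intros)
    then have "continuous_on (\<psi> x) (\<lambda>a. c (x, a))"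
      by (rule continuous_on_compose2[OF lipschitz_on_continuous_on[OF c_lip]]) (auto simp: K_def)
    then show ?thesis using \<psi>_compact by (simp add: compact_imp_bounded compact_continuous_image)
  qed
  note cost_le = cost_bound_components[OF cost_bound[rule_format] h2_bdd c_bdd \<psi>_nonempty[rule_format]]
  interpret smoothed_mdp Xs \<psi> Q c w T L\<psi> Lc Lq cbar dbar h1 f1 f2 b Lh1 Lf1 Lf2 "max B1 B2"
  proof unfold_locales
    show "Lc-lipschitz_on {(x, a). a \<in> \<psi> x} c" using c_lip unfolding K_def .
    show "w \<in> borel_measurable borel" using w_lsc by (rule lsc_on_UNIV_borel_measurable)
    show "\<And>t x a y a' v Lv. t < T \<Longrightarrow> x \<in> Xs t \<Longrightarrow> a \<in> \<psi> x \<Longrightarrow> y \<in> Xs t \<Longrightarrow> a' \<in> \<psi> y \<Longrightarrow>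
        Lv-lipschitz_on UNIV v \<Longrightarrow>
        \<bar>zeta Xs Q v t (x,a) - zeta Xs Q v t (y,a')\<bar> \<le> Lq * Lv * (dist x y + dist a a')"
      using zeta_lip unfolding Kt_def by fastforce
    show "\<And>\<theta>. 0 < \<theta> \<Longrightarrow> \<exists>\<Lambda>. \<forall>lam>\<Lambda>.
        (SUP p\<in>{(x, a). a \<in> \<psi> x}. set_nn_integral (Q (T - 1) p) (R_set lam b) (\<lambda>y. ennreal (w y)))
          < ennreal \<theta>"
      using tail unfolding K_def by blast
    show "\<And>t x a. t < T \<Longrightarrow> a \<in> \<psi> x \<Longrightarrow>
        prob_space (Q t (x,a)) \<and> sets (Q t (x,a)) = sets borel \<and> emeasure (Q t (x,a)) (Xs (Suc t)) = 1"
      using Q_prob unfolding K_def by blast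
    show "\<And>t x a. t < T \<Longrightarrow> x \<in> Xs t \<Longrightarrow> a \<in> \<psi> x \<Longrightarrow>
        set_nn_integral (Q t (x,a)) (Xs (Suc t)) (\<lambda>y. ennreal (w y)) \<le> ennreal (dbar * w x)"
      using zeta_w_bound unfolding Kt_def by fastforce
  qed (use Xs_borel \<psi>_nonempty \<psi>_compact L\<psi>_pos \<psi>_lip w_pos cbar_pos dbar_pos Lq_pos
         h1_lip f1_lip f2_lip f_le cost_le h2_def in \<open>simp_all add: less_imp_le\<close>)
  have "h = h_disc" using h_def h2_def by (auto simp: h_disc_def)
  then show ?thesis using smoothing_error unfolding J_def h_smoothed_def[abs_def] by simp
qed

end
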